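(* For $\mathbf{x}=(x_1,\dots,x_N)^{\mathrm T}\in\mathbb{R}^N$ define $$\ell_{\mathrm{bin,exp}}(\mathbf{x})=N\sum_{n=1}^N e^{-2x_n^2}-\Big(\sum_{n=1}^N e^{-x_n^2}\Big)^2.$$ Then $\ell_{\mathrm{bin,exp}}(\mathbf{x})\ge0$ for all $\mathbf{x}$, and $\ell_{\mathrm{bin,exp}}(\mathbf{x})=0$ if and only if $\mathbf{x}\in\{-\alpha,\alpha\}^N$ for some $\alpha\in\mathbb{R}$. *)

theory Defs
  imports "HOL-Analysis.Analysis"
begin

definition l_bin_exp :: "real ^ 'n \<Rightarrow> real" where
  "l_bin_exp x = real CARD('n) * (\<Sum>n\<in>UNIV. exp (- 2 * (x $ n)^2))
                 - (\<Sum>n\<in>UNIV. exp (- ((x $ n)^2)))^2"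

end

theory Submission
  imports Defs
begin

text \<open>With \<open>a n = exp (- (x $ n)\<^sup>2)\<close>, \<open>l_bin_exp x\<close> becomes \<open>N \<Sum> a\<^sup>2 - (\<Sum> a)\<^sup>2\<close>,
  which by Lagrange's identity is half the sum of \<open>(a i - a j)\<^sup>2\<close> over all pairs.
  Hence it is nonnegative and vanishes exactly when all \<open>a n\<close> agree, i.e. when all
  \<open>\<bar>x $ n\<bar>\<close> agree.\<close>

lemma Lagrange_sum_sq_diff:
  fixes a :: "'a \<Rightarrow> 'b::comm_ring_1"
  shows "2 * (of_nat (card A) * (\<Sum>i\<in>A. (a i)\<^sup>2) - (\<Sum>i\<in>A. a i)\<^sup>2)
         = (\<Sum>i\<in>A. \<Sum>j\<in>A. (a i - a j)\<^sup>2)"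
proof -
  have "(\<Sum>i\<in>A. \<Sum>j\<in>A. (a i - a j)\<^sup>2)
      = (\<Sum>i\<in>A. \<Sum>j\<in>A. (a i)\<^sup>2 + (a j)\<^sup>2 - 2 * (a i * a j))"
    by (simp add: power2_diff algebra_simps)
  also have "\<dots> = (\<Sum>i\<in>A. of_nat (card A) * (a i)\<^sup>2 + (\<Sum>j\<in>A. (a j)\<^sup>2)
                     - 2 * (a i * (\<Sum>j\<in>A. a j)))"
    by (simp add: sum.distrib sum_subtractf sum_distrib_left)
  also have "\<dots> = 2 * (of_nat (card A) * (\<Sum>i\<in>A. (a i)\<^sup>2) - (\<Sum>i\<in>A. a i)\<^sup>2)"
    by (simp add: sum.distrib sum_subtractf sum_distrib_left sum_distrib_right
        power2_eq_square algebra_simps)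
  finally show ?thesis by simp
qed

lemma card_sum_sq_minus_sq_sum_nonneg:
  fixes a :: "'a \<Rightarrow> 'b::linordered_idom"
  shows "of_nat (card A) * (\<Sum>i\<in>A. (a i)\<^sup>2) - (\<Sum>i\<in>A. a i)\<^sup>2 \<ge> 0"
proof -
  have "(\<Sum>i\<in>A. \<Sum>j\<in>A. (a i - a j)\<^sup>2) \<ge> 0"
    by (intro sum_nonneg) auto
  then show ?thesis
    using Lagrange_sum_sq_diff[of A a] by (simp add: zero_le_mult_iff)
qed

lemma card_sum_sq_minus_sq_sum_eq_0_iff:
  fixes a :: "'a \<Rightarrow> 'b::linordered_idom"
  assumes "finite A"
  shows "of_nat (card A) * (\<Sum>i\<in>A. (a i)\<^sup>2) - (\<Sum>i\<in>A. a i)\<^sup>2 = 0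
         \<longleftrightarrow> (\<forall>i\<in>A. \<forall>j\<in>A. a i = a j)"
proof -
  have "of_nat (card A) * (\<Sum>i\<in>A. (a i)\<^sup>2) - (\<Sum>i\<in>A. a i)\<^sup>2 = 0
        \<longleftrightarrow> (\<Sum>i\<in>A. \<Sum>j\<in>A. (a i - a j)\<^sup>2) = 0"
    using Lagrange_sum_sq_diff[of A a] by auto
  also have "\<dots> \<longleftrightarrow> (\<forall>i\<in>A. \<forall>j\<in>A. a i = a j)"
    using assms by (simp add: sum_nonneg_eq_0_iff sum_nonneg)
  finally show ?thesis .
qed

lemma l_bin_exp_eq_card_sum_sq_minus_sq_sum:
  fixes x :: "real ^ 'n"
  shows "l_bin_exp x = real CARD('n) * (\<Sum>n\<in>UNIV. (exp (- (x $ n)\<^sup>2))\<^sup>2)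
                       - (\<Sum>n\<in>UNIV. exp (- (x $ n)\<^sup>2))\<^sup>2"
proof -
  have "exp (- 2 * t\<^sup>2) = (exp (- t\<^sup>2))\<^sup>2" for t :: real
    by (simp add: power2_eq_square flip: exp_add)
  then show ?thesis
    by (simp add: l_bin_exp_def)
qed

lemma all_abs_eq_iff_in_pm:
  fixes x :: "'n \<Rightarrow> real"
  shows "(\<forall>i j. \<bar>x i\<bar> = \<bar>x j\<bar>) \<longleftrightarrow> (\<exists>\<alpha>. \<forall>n. x n \<in> {-\<alpha>, \<alpha>})"
proof
  assume abs_eq: "\<forall>i j. \<bar>x i\<bar> = \<bar>x j\<bar>"
  have "x n \<in> {- \<bar>x k\<bar>, \<bar>x k\<bar>}" for k n
    using abs_eq[rule_format, of n k] by (cases "x n \<ge> 0") auto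
  then show "\<exists>\<alpha>. \<forall>n. x n \<in> {-\<alpha>, \<alpha>}"
    by blast
next
  assume "\<exists>\<alpha>. \<forall>n. x n \<in> {-\<alpha>, \<alpha>}"
  then obtain \<alpha> where pm: "\<forall>n. x n \<in> {-\<alpha>, \<alpha>}"
    by blast
  have "\<bar>x n\<bar> = \<bar>\<alpha>\<bar>" for n
    using pm[rule_format, of n] by auto
  then show "\<forall>i j. \<bar>x i\<bar> = \<bar>x j\<bar>"
    by simp
qed

theorem mainTheorem11:
  fixes x :: "real ^ 'n"
  shows "l_bin_exp x \<ge> 0 \<and>
         (l_bin_exp x = 0 \<longleftrightarrow> (\<exists>\<alpha>::real. \<forall>n. x $ n \<in> {-\<alpha>, \<alpha>}))"
proof -
  define a where "a n = exp (- (x $ n)\<^sup>2)" for n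
  have l_bin_exp_a: "l_bin_exp x = of_nat (card (UNIV :: 'n set)) * (\<Sum>n\<in>UNIV. (a n)\<^sup>2)
                                   - (\<Sum>n\<in>UNIV. a n)\<^sup>2"
    unfolding a_def l_bin_exp_eq_card_sum_sq_minus_sq_sum by simp
  have "l_bin_exp x \<ge> 0"
    unfolding l_bin_exp_a by (rule card_sum_sq_minus_sq_sum_nonneg)
  moreover have "l_bin_exp x = 0 \<longleftrightarrow> (\<forall>i j. \<bar>x $ i\<bar> = \<bar>x $ j\<bar>)"
    unfolding l_bin_exp_a card_sum_sq_minus_sq_sum_eq_0_iff[OF finite]
    by (simp add: a_def power2_eq_iff abs_eq_iff)
  ultimately show ?thesis
    using all_abs_eq_iff_in_pm[of "\<lambda>n. x $ n"] by simp
qed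

end
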